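(* For any integers $r,t\ge 3$, $dim_s(K_r\times K_t)=\max\{r(t-1),\ t(r-1)\}$.
   Context: $K_n$ is the complete graph on $n$ vertices. The direct product $G\times H$ has vertex set $V(G)\times V(H)$, with $(a,b)$ adjacent to $(c,d)$ iff $ac\in E(G)$ and $bd\in E(H)$. For a connected graph $G$, $I_G[u,v]$ is the set of vertices lying on some shortest $u$–$v$ path; a vertex $w$ strongly resolves $u,v$ if $v\in I_G[u,w]$ or $u\in I_G[v,w]$; a strong resolving set is a set $S\subseteq V(G)$ such that every pair of vertices is strongly resolved by some vertex of $S$; $dim_s(G)$ is the minimum cardinality of a strong resolving set. *)

theory Defs
  imports Main
begin

text \<open>A graph is given by a vertex set V and an adjacency relation E
 (assumed symmetric and irreflexive where relevant).\<close>

definition is_walk :: "'a set \<Rightarrow> ('a \<Rightarrow> 'a \<Rightarrow> bool) \<Rightarrow> 'a list \<Rightarrow> bool" where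
  "is_walk V E p \<longleftrightarrow> p \<noteq> [] \<and> set p \<subseteq> V \<and>
     (\<forall>i. Suc i < length p \<longrightarrow> E (p ! i) (p ! Suc i))"

text \<open>Walk from u to v; its length is the number of edges, length p - 1.\<close>
definition walk_between :: "'a set \<Rightarrow> ('a \<Rightarrow> 'a \<Rightarrow> bool) \<Rightarrow> 'a \<Rightarrow> 'a \<Rightarrow> 'a list \<Rightarrow> bool" where
  "walk_between V E u v p \<longleftrightarrow> is_walk V E p \<and> hd p = u \<and> last p = v"

definition gdist :: "'a set \<Rightarrow> ('a \<Rightarrow> 'a \<Rightarrow> bool) \<Rightarrow> 'a \<Rightarrow> 'a \<Rightarrow> nat" where
  "gdist V E u v = (LEAST n. \<exists>p. walk_between V E u v p \<and> length p = Suc n)"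

definition connected_graph :: "'a set \<Rightarrow> ('a \<Rightarrow> 'a \<Rightarrow> bool) \<Rightarrow> bool" where
  "connected_graph V E \<longleftrightarrow> V \<noteq> {} \<and> (\<forall>u\<in>V. \<forall>v\<in>V. \<exists>p. walk_between V E u v p)"

definition interval :: "'a set \<Rightarrow> ('a \<Rightarrow> 'a \<Rightarrow> bool) \<Rightarrow> 'a \<Rightarrow> 'a \<Rightarrow> 'a set" where
  "interval V E u v = {w. \<exists>p. walk_between V E u v p \<and> length p = Suc (gdist V E u v) \<and> w \<in> set p}"

definition strongly_resolves :: "'a set \<Rightarrow> ('a \<Rightarrow> 'a \<Rightarrow> bool) \<Rightarrow> 'a \<Rightarrow> 'a \<Rightarrow> 'a \<Rightarrow> bool" where
  "strongly_resolves V E w u v \<longleftrightarrow> v \<in> interval V E u w \<or> u \<in> interval V E v w"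

definition strong_resolving_set :: "'a set \<Rightarrow> ('a \<Rightarrow> 'a \<Rightarrow> bool) \<Rightarrow> 'a set \<Rightarrow> bool" where
  "strong_resolving_set V E S \<longleftrightarrow> S \<subseteq> V \<and>
     (\<forall>u\<in>V. \<forall>v\<in>V. u \<noteq> v \<longrightarrow> (\<exists>w\<in>S. strongly_resolves V E w u v))"

definition strong_metric_dim :: "'a set \<Rightarrow> ('a \<Rightarrow> 'a \<Rightarrow> bool) \<Rightarrow> nat" where
  "strong_metric_dim V E = (LEAST k. \<exists>S. strong_resolving_set V E S \<and> finite S \<and> card S = k)"

definition K_verts :: "nat \<Rightarrow> nat set" where "K_verts n = {0..<n}"
definition K_adj :: "nat \<Rightarrow> nat \<Rightarrow> bool" where "K_adj a b \<longleftrightarrow> a \<noteq> b"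

definition dprod_verts :: "'a set \<Rightarrow> 'b set \<Rightarrow> ('a \<times> 'b) set" where
  "dprod_verts VG VH = VG \<times> VH"
definition dprod_adj :: "('a \<Rightarrow> 'a \<Rightarrow> bool) \<Rightarrow> ('b \<Rightarrow> 'b \<Rightarrow> bool) \<Rightarrow> 'a \<times> 'b \<Rightarrow> 'a \<times> 'b \<Rightarrow> bool" where
  "dprod_adj EG EH x y \<longleftrightarrow> EG (fst x) (fst y) \<and> EH (snd x) (snd y)"

end

theory Submission
  imports Defs
begin

text \<open>In \<open>K\<^sub>r \<times> K\<^sub>t\<close> with \<open>r, t \<ge> 3\<close> every two vertices have a common neighbour, so the
  diameter is at most 2. In such a graph neither vertex of a non-adjacent pair \<open>u, v\<close> lies on a
  shortest path from the other one to a third vertex, so the pair is strongly resolved only by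
  \<open>u\<close> or \<open>v\<close> themselves: the complement of a strong resolving set is a clique. Cliques of \<open>K\<^sub>r \<times> K\<^sub>t\<close> are partial injections
  \<open>{0..<r} \<rightharpoonup> {0..<t}\<close>, so they have at most \<open>min r t\<close> vertices. Conversely, removing the
  diagonal clique leaves a strong resolving set, since each remaining pair \<open>(i,i), (j,j)\<close> is
  resolved by \<open>(i,c)\<close> for any third index \<open>c\<close>.\<close>

definition has_common_neighbours :: "'a set \<Rightarrow> ('a \<Rightarrow> 'a \<Rightarrow> bool) \<Rightarrow> bool" where
  "has_common_neighbours V E \<longleftrightarrow> (\<forall>u\<in>V. \<forall>w\<in>V. \<exists>x\<in>V. E u x \<and> E x w)"

definition clique :: "'a set \<Rightarrow> ('a \<Rightarrow> 'a \<Rightarrow> bool) \<Rightarrow> 'a set \<Rightarrow> bool" where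
  "clique V E K \<longleftrightarrow> K \<subseteq> V \<and> (\<forall>x\<in>K. \<forall>y\<in>K. x \<noteq> y \<longrightarrow> E x y)"

lemma walk_between_nonempty: "walk_between V E u v p \<Longrightarrow> p \<noteq> []"
  by (simp add: walk_between_def is_walk_def)

lemma gdist_le_walk:
  assumes "walk_between V E u v p"
  shows "gdist V E u v \<le> length p - 1"
proof -
  have "length p = Suc (length p - 1)"
    using walk_between_nonempty[OF assms] by simp
  with assms show ?thesis
    unfolding gdist_def by (blast intro: Least_le)
qed

lemma shortest_walk_exists:
  assumes "walk_between V E u v p"
  shows "\<exists>q. walk_between V E u v q \<and> length q = Suc (gdist V E u v)"
proof -
  have "\<exists>n q. walk_between V E u v q \<and> length q = Suc n"
    using assms walk_between_nonempty[OF assms] by (metis Suc_pred length_greater_0_conv)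
  then show ?thesis
    unfolding gdist_def by (rule LeastI_ex)
qed

lemma walk_between_take:
  assumes "walk_between V E u w p" "i < length p"
  shows "walk_between V E u (p ! i) (take (Suc i) p)"
proof -
  have len: "length (take (Suc i) p) = Suc i"
    using assms(2) by simp
  then have "last (take (Suc i) p) = p ! i"
    by (metis diff_Suc_1 last_conv_nth lessI list.size(3) nat.distinct(1) nth_take)
  with assms len show ?thesis
    unfolding walk_between_def is_walk_def by (auto simp: hd_take dest: in_set_takeD)
qed

lemma walk_between_three:
  assumes "u \<in> V" "x \<in> V" "w \<in> V" "E u x" "E x w"
  shows "walk_between V E u w [u, x, w]"
  using assms unfolding walk_between_def is_walk_def
  by (auto simp: less_Suc_eq nth_Cons split: nat.split)

lemma walk_between_nonadjacent_length:
  assumes "u \<noteq> v" "\<not> E u v" "walk_between V E u v p"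
  shows "length p \<ge> 3"
proof (rule ccontr)
  assume "\<not> length p \<ge> 3"
  then consider x where "p = [x]" | x y where "p = [x, y]"
    using walk_between_nonempty[OF assms(3)]
    by (cases p rule: remdups_adj.cases) (auto simp: numeral_eq_Suc Suc_le_eq)
  then show False
    using assms by cases (auto simp: walk_between_def is_walk_def)
qed

lemma end_in_interval:
  assumes "walk_between V E v u p"
  shows "u \<in> interval V E v u"
proof -
  obtain q where q: "walk_between V E v u q" "length q = Suc (gdist V E v u)"
    using shortest_walk_exists[OF assms] by blast
  then have "u \<in> set q"
    using walk_between_nonempty[OF q(1)] by (auto simp: walk_between_def)
  with q show ?thesis
    unfolding interval_def by blast
qed

text \<open>Reaching the non-neighbour \<open>v\<close> from \<open>u\<close> takes two steps, which already exhausts a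
  shortest \<open>u\<close>--\<open>w\<close> walk.\<close>
lemma interval_nonadjacent_eq_end:
  assumes "v \<in> interval V E u w" "v \<noteq> u" "\<not> E u v" "gdist V E u w \<le> 2"
  shows "v = w"
proof -
  obtain p where p: "walk_between V E u w p" "length p = Suc (gdist V E u w)" "v \<in> set p"
    using assms(1) unfolding interval_def by blast
  then obtain i where i: "i < length p" "p ! i = v"
    by (meson in_set_conv_nth)
  have "walk_between V E u v (take (Suc i) p)"
    using walk_between_take[OF p(1) i(1)] i(2) by simp
  then have "length (take (Suc i) p) \<ge> 3"
    using assms(2,3) by (intro walk_between_nonadjacent_length) auto
  with i p assms(4) have "i = length p - 1"
    by simp
  moreover have "last p = w" "p \<noteq> []"
    using p(1) walk_between_nonempty[OF p(1)] by (auto simp: walk_between_def)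
  ultimately show ?thesis
    using i(2) by (simp add: last_conv_nth)
qed

lemma middle_in_interval:
  assumes "u \<in> V" "x \<in> V" "w \<in> V" "E u x" "E x w" "u \<noteq> w" "\<not> E u w"
  shows "x \<in> interval V E u w"
proof -
  have uxw: "walk_between V E u w [u, x, w]"
    using assms(1-5) by (rule walk_between_three)
  obtain q where q: "walk_between V E u w q" "length q = Suc (gdist V E u w)"
    using shortest_walk_exists[OF uxw] by blast
  have "gdist V E u w = 2"
    using walk_between_nonadjacent_length[OF assms(6,7) q(1)] q(2) gdist_le_walk[OF uxw]
    by simp
  with uxw show ?thesis
    unfolding interval_def by force
qed

lemma has_common_neighbours_walk:
  assumes "has_common_neighbours V E" "u \<in> V" "w \<in> V"
  obtains x where "walk_between V E u w [u, x, w]"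
  using assms unfolding has_common_neighbours_def by (metis walk_between_three)

lemma has_common_neighbours_gdist_le:
  assumes "has_common_neighbours V E" "u \<in> V" "w \<in> V"
  shows "gdist V E u w \<le> 2"
proof -
  obtain x where "walk_between V E u w [u, x, w]"
    using has_common_neighbours_walk[OF assms] .
  from gdist_le_walk[OF this] show ?thesis
    by simp
qed

lemma strong_resolving_complement_clique:
  assumes common: "has_common_neighbours V E"
    and sym: "\<And>x y. E x y \<Longrightarrow> E y x"
    and S: "strong_resolving_set V E S"
  shows "clique V E (V - S)"
  unfolding clique_def
proof (intro conjI ballI impI)
  fix x y assume xy: "x \<in> V - S" "y \<in> V - S" "x \<noteq> y"
  show "E x y"
  proof (rule ccontr)
    assume "\<not> E x y"
    then have "\<not> E y x"
      using sym by blast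
    obtain w where w: "w \<in> S" "strongly_resolves V E w x y"
      using S xy unfolding strong_resolving_set_def by blast
    then have "w \<in> V"
      using S unfolding strong_resolving_set_def by blast
    have "x \<in> V" "y \<in> V"
      using xy by auto
    have "y = w" if "y \<in> interval V E x w"
      using interval_nonadjacent_eq_end[OF that _ \<open>\<not> E x y\<close>
          has_common_neighbours_gdist_le[OF common \<open>x \<in> V\<close> \<open>w \<in> V\<close>]] xy(3)
      by blast
    moreover have "x = w" if "x \<in> interval V E y w"
      using interval_nonadjacent_eq_end[OF that _ \<open>\<not> E y x\<close>
          has_common_neighbours_gdist_le[OF common \<open>y \<in> V\<close> \<open>w \<in> V\<close>]] xy(3)
      by blast
    ultimately show False
      using w xy unfolding strongly_resolves_def by blast
  qed
qed simp

text \<open>Pairs meeting \<open>V - K\<close> are resolved by their own vertex; a pair \<open>u, v\<close> inside the clique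
  is resolved by a vertex \<open>w\<close> outside \<open>K\<close> at distance 2 from \<open>u\<close> via \<open>v\<close>.\<close>
lemma strong_resolving_complement_of_clique:
  assumes common: "has_common_neighbours V E"
    and K: "clique V E K"
    and escape: "\<And>u v. u \<in> K \<Longrightarrow> v \<in> K \<Longrightarrow> u \<noteq> v \<Longrightarrow> \<exists>w\<in>V - K. E v w \<and> \<not> E u w"
  shows "strong_resolving_set V E (V - K)"
  unfolding strong_resolving_set_def
proof (intro conjI ballI impI)
  fix u v assume uv: "u \<in> V" "v \<in> V" "u \<noteq> v"
  have self_resolves: "u \<in> interval V E v u" "v \<in> interval V E u v"
    using has_common_neighbours_walk[OF common] uv end_in_interval by metis+
  show "\<exists>w\<in>V - K. strongly_resolves V E w u v"
  proof (cases "u \<in> K \<and> v \<in> K")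
    case True
    then obtain w where w: "w \<in> V - K" "E v w" "\<not> E u w"
      using escape uv(3) by blast
    have "E u v"
      using K True uv(3) unfolding clique_def by blast
    with w uv True have "v \<in> interval V E u w"
      by (intro middle_in_interval) auto
    with w show ?thesis
      unfolding strongly_resolves_def by blast
  next
    case False
    with uv self_resolves show ?thesis
      unfolding strongly_resolves_def by blast
  qed
qed blast

lemma strong_metric_dim_eqI:
  assumes "strong_resolving_set V E S" "finite S" "card S = k"
    and "\<And>S'. strong_resolving_set V E S' \<Longrightarrow> finite S' \<Longrightarrow> k \<le> card S'"
  shows "strong_metric_dim V E = k"
  unfolding strong_metric_dim_def
  using assms by (intro Least_equality) auto

lemma dprod_K_adj_iff: "dprod_adj K_adj K_adj x y \<longleftrightarrow> fst x \<noteq> fst y \<and> snd x \<noteq> snd y"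
  by (simp add: dprod_adj_def K_adj_def)

lemma exists_third_index: "\<exists>c::nat. c < 3 \<and> c \<noteq> a \<and> c \<noteq> b"
  by (rule exI[of _ "if a \<noteq> 0 \<and> b \<noteq> 0 then 0 else if a \<noteq> 1 \<and> b \<noteq> 1 then 1 else 2"]) auto

lemma dprod_K_has_common_neighbours:
  assumes "r \<ge> 3" "t \<ge> 3"
  shows "has_common_neighbours (dprod_verts (K_verts r) (K_verts t)) (dprod_adj K_adj K_adj)"
  unfolding has_common_neighbours_def
proof (intro ballI)
  fix u w
  assume "u \<in> dprod_verts (K_verts r) (K_verts t)" "w \<in> dprod_verts (K_verts r) (K_verts t)"
  obtain c where "c < 3" "c \<noteq> fst u" "c \<noteq> fst w"
    using exists_third_index by blast
  moreover obtain d where "d < 3" "d \<noteq> snd u" "d \<noteq> snd w"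
    using exists_third_index by blast
  ultimately show "\<exists>x\<in>dprod_verts (K_verts r) (K_verts t).
      dprod_adj K_adj K_adj u x \<and> dprod_adj K_adj K_adj x w"
    using assms \<open>u \<in> _\<close> \<open>w \<in> _\<close>
    by (intro bexI[of _ "(c, d)"]) (auto simp: dprod_K_adj_iff dprod_verts_def K_verts_def)
qed

text \<open>Both coordinate projections are injective on a clique.\<close>
lemma dprod_K_clique_card_le:
  assumes "clique (dprod_verts (K_verts r) (K_verts t)) (dprod_adj K_adj K_adj) K"
  shows "card K \<le> min r t"
proof -
  have inj: "inj_on fst K" "inj_on snd K"
    using assms unfolding clique_def inj_on_def dprod_K_adj_iff by blast+
  have "fst ` K \<subseteq> {0..<r}" "snd ` K \<subseteq> {0..<t}"
    using assms unfolding clique_def dprod_verts_def K_verts_def by auto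
  then have "card (fst ` K) \<le> r" "card (snd ` K) \<le> t"
    by (metis card_atLeastLessThan card_mono diff_zero finite_atLeastLessThan)+
  with inj show ?thesis
    by (simp add: card_image)
qed

lemma dprod_K_diagonal_clique:
  "clique (dprod_verts (K_verts r) (K_verts t)) (dprod_adj K_adj K_adj)
     ((\<lambda>i. (i, i)) ` {0..<min r t})"
  unfolding clique_def dprod_verts_def K_verts_def dprod_K_adj_iff by auto

lemma dprod_K_diagonal_escape:
  assumes "t \<ge> 3"
    and "u \<in> (\<lambda>i. (i, i)) ` {0..<min r t}" "v \<in> (\<lambda>i. (i, i)) ` {0..<min r t}" "u \<noteq> v"
  shows "\<exists>w\<in>dprod_verts (K_verts r) (K_verts t) - (\<lambda>i. (i, i)) ` {0..<min r t}.
           dprod_adj K_adj K_adj v w \<and> \<not> dprod_adj K_adj K_adj u w"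
proof -
  obtain i j where ij: "u = (i, i)" "v = (j, j)" "i < min r t" "j < min r t"
    using assms(2,3) by auto
  obtain c where "c < 3" "c \<noteq> i" "c \<noteq> j"
    using exists_third_index by blast
  with ij assms show ?thesis
    by (intro bexI[of _ "(i, c)"]) (auto simp: dprod_verts_def K_verts_def dprod_K_adj_iff)
qed

lemma max_mult_pred_eq:
  fixes r t :: nat
  shows "max (r * (t - 1)) (t * (r - 1)) = r * t - min r t"
  by (cases "r = 0 \<or> t = 0")
    (auto simp: right_diff_distrib' mult.commute max_def min_def le_diff_iff')

theorem proposition34:
  fixes r t :: nat
  assumes "r \<ge> 3" and "t \<ge> 3"
  shows "strong_metric_dim (dprod_verts (K_verts r) (K_verts t)) (dprod_adj K_adj K_adj)
           = max (r * (t - 1)) (t * (r - 1))"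
proof -
  let ?V = "dprod_verts (K_verts r) (K_verts t)"
  let ?E = "dprod_adj K_adj K_adj"
  let ?D = "(\<lambda>i. (i, i)) ` {0..<min r t}"
  have V: "finite ?V" "card ?V = r * t"
    by (auto simp: dprod_verts_def K_verts_def card_cartesian_product)
  note common = dprod_K_has_common_neighbours[OF assms]
  have resolving: "strong_resolving_set ?V ?E (?V - ?D)"
    by (rule strong_resolving_complement_of_clique[OF common dprod_K_diagonal_clique
          dprod_K_diagonal_escape[OF assms(2)]])
  have card_resolving: "card (?V - ?D) = r * t - min r t"
  proof -
    have "?D \<subseteq> ?V" "card ?D = min r t"
      using dprod_K_diagonal_clique by (auto simp: clique_def card_image inj_on_def)
    with V show ?thesis
      by (simp add: card_Diff_subset finite_subset)
  qed
  have minimal: "r * t - min r t \<le> card S"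
    if "strong_resolving_set ?V ?E S" "finite S" for S
  proof -
    have "clique ?V ?E (?V - S)"
      by (rule strong_resolving_complement_clique[OF common _ that(1)])
        (auto simp: dprod_K_adj_iff)
    then have "card (?V - S) \<le> min r t"
      by (rule dprod_K_clique_card_le)
    moreover have "card ?V - card S \<le> card (?V - S)"
      using that(2) by (rule diff_card_le_card_Diff)
    ultimately show ?thesis
      using V(2) by linarith
  qed
  have "strong_metric_dim ?V ?E = r * t - min r t"
    by (rule strong_metric_dim_eqI[OF resolving _ card_resolving minimal]) (simp add: V(1))
  then show ?thesis
    unfolding max_mult_pred_eq .
qed

end
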